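(* Let $\mathcal{X}\subseteq\mathbb{R}^N$, $\Theta\subseteq\mathbb{R}^K$, and let $p(\mathbf{x},\boldsymbol{\theta})$ be a joint p.d.f. on $\mathcal{X}\times\Theta$ with marginal $p(\mathbf{x})$, posterior $p(\boldsymbol{\theta}\mid\mathbf{x})$ and support $\mathcal{S}_{\mathcal{X}}=\{\mathbf{x}: p(\mathbf{x})>0\}$. Let $\mathbf{g}=(g_1,\dots,g_L)^{T}$ with each $g_\ell\in\mathcal{W}_2$, and let $\boldsymbol{\varphi}=(\varphi_1,\dots,\varphi_M)^{T}$ with each $\varphi_m\in\mathcal{W}_2$, the functions $\varphi_1,\dots,\varphi_M$ being linearly independent in $\mathcal{L}_2(p(\mathbf{x},\boldsymbol{\theta}))$. Let $\boldsymbol{\zeta}=(\zeta_1,\dots,\zeta_L)^{T}$ with each $\zeta_\ell\in\mathcal{W}_2$ satisfying, for a.e. $\mathbf{x}\in\mathcal{S}_{\mathcal{X}}$, $\mathrm{E}_{\boldsymbol{\theta}\mid\mathbf{x}}[\zeta_\ell(\mathbf{x},\boldsymbol{\theta})\,\boldsymbol{\varphi}(\mathbf{x},\boldsymbol{\theta})]=\mathbf{0}$. Assume that $\mathbf{Q}_{\boldsymbol{\varphi}\mid\mathbf{x}}$ is invertible for a.e. $\mathbf{x}\in\mathcal{S}_{\mathcal{X}}$. Then \[ \mathbf{Q}_{(\mathbf{g}-\boldsymbol{\zeta})}\succeq \mathrm{E}_{\mathbf{x}}\big[\mathbf{R}_{\mathbf{g}\boldsymbol{\varphi}\mid\mathbf{x}}\,\mathbf{Q}_{\boldsymbol{\varphi}\mid\mathbf{x}}^{-1}\,\mathbf{R}_{\mathbf{g}\boldsymbol{\varphi}\mid\mathbf{x}}^{T}\big]\succeq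 \mathbf{R}_{\mathbf{g}\boldsymbol{\varphi}}\,\mathbf{Q}_{\boldsymbol{\varphi}}^{-1}\,\mathbf{R}_{\mathbf{g}\boldsymbol{\varphi}}^{T}, \] where $\mathbf{A}\succeq\mathbf{B}$ means $\mathbf{A}-\mathbf{B}$ is positive semi-definite.
   Context: $\mathcal{L}_2(p(\mathbf{x},\boldsymbol{\theta}))$ is the space of real functions $\zeta(\mathbf{x},\boldsymbol{\theta})$ with $\mathrm{E}_{\mathbf{x},\boldsymbol{\theta}}[\zeta^2]<\infty$ (expectation w.r.t. the joint p.d.f.). $\mathcal{W}_2$ is the subspace of those $\zeta\in\mathcal{L}_2(p(\mathbf{x},\boldsymbol{\theta}))$ such that for a.e. $\mathbf{x}\in\mathcal{S}_{\mathcal{X}}$, $\mathrm{E}_{\boldsymbol{\theta}\mid\mathbf{x}}[\zeta(\mathbf{x},\boldsymbol{\theta})^2]<\infty$, where $\mathrm{E}_{\boldsymbol{\theta}\mid\mathbf{x}}$ denotes expectation w.r.t. $p(\boldsymbol{\theta}\mid\mathbf{x})$ and $\mathrm{E}_{\mathbf{x}}$ expectation w.r.t. $p(\mathbf{x})$. Define the matrices $\mathbf{Q}_{(\mathbf{g}-\boldsymbol{\zeta})}=\mathrm{E}_{\mathbf{x},\boldsymbol{\theta}}[(\mathbf{g}-\boldsymbol{\zeta})(\mathbf{g}-\boldsymbol{\zeta})^{T}]$ ($L\times L$), $\mathbf{R}_{\mathbf{g}\boldsymbol{\varphi}}=\mathrm{E}_{\mathbf{x},\boldsymbol{\theta}}[\mathbf{g}(\mathbf{x},\boldsymbol{\theta})\boldsymbol{\varphi}(\mathbf{x},\boldsymbol{\theta})^{T}]$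 ($L\times M$), $\mathbf{Q}_{\boldsymbol{\varphi}}=\mathrm{E}_{\mathbf{x},\boldsymbol{\theta}}[\boldsymbol{\varphi}\boldsymbol{\varphi}^{T}]$ ($M\times M$), and their posterior counterparts $\mathbf{R}_{\mathbf{g}\boldsymbol{\varphi}\mid\mathbf{x}}=\mathrm{E}_{\boldsymbol{\theta}\mid\mathbf{x}}[\mathbf{g}(\mathbf{x},\boldsymbol{\theta})\boldsymbol{\varphi}(\mathbf{x},\boldsymbol{\theta})^{T}]$ and $\mathbf{Q}_{\boldsymbol{\varphi}\mid\mathbf{x}}=\mathrm{E}_{\boldsymbol{\theta}\mid\mathbf{x}}[\boldsymbol{\varphi}(\mathbf{x},\boldsymbol{\theta})\boldsymbol{\varphi}(\mathbf{x},\boldsymbol{\theta})^{T}]$. *)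

theory Defs
  imports "HOL-Analysis.Analysis"
begin

definition marg :: "((real^'n) \<times> (real^'k) \<Rightarrow> real) \<Rightarrow> real^'n \<Rightarrow> real" where
  "marg p x = (\<integral>\<theta>. p (x, \<theta>) \<partial>lborel)"

definition support :: "((real^'n) \<times> (real^'k) \<Rightarrow> real) \<Rightarrow> (real^'n) set" where
  "support p = {x. marg p x > 0}"

definition joint_exp :: "((real^'n) \<times> (real^'k) \<Rightarrow> real) \<Rightarrow> ((real^'n) \<times> (real^'k) \<Rightarrow> real) \<Rightarrow> real" where
  "joint_exp p f = (\<integral>z. p z * f z \<partial>lborel)"

definition post_exp :: "((real^'n) \<times> (real^'k) \<Rightarrow> real) \<Rightarrow> real^'n \<Rightarrow> (real^'k \<Rightarrow> real) \<Rightarrow> real" where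
  "post_exp p x f = (\<integral>\<theta>. (p (x, \<theta>) / marg p x) * f \<theta> \<partial>lborel)"

definition marg_exp :: "((real^'n) \<times> (real^'k) \<Rightarrow> real) \<Rightarrow> (real^'n \<Rightarrow> real) \<Rightarrow> real" where
  "marg_exp p h = (\<integral>x. marg p x * h x \<partial>lborel)"

definition W2 :: "((real^'n) \<times> (real^'k) \<Rightarrow> real) \<Rightarrow> ((real^'n) \<times> (real^'k) \<Rightarrow> real) \<Rightarrow> bool" where
  "W2 p \<zeta> \<longleftrightarrow> \<zeta> \<in> borel_measurable lborel
     \<and> integrable lborel (\<lambda>z. p z * (\<zeta> z)\<^sup>2)
     \<and> (AE x in lborel. x \<in> support p \<longrightarrow>
          integrable lborel (\<lambda>\<theta>. (p (x, \<theta>) / marg p x) * (\<zeta> (x, \<theta>))\<^sup>2))"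

definition lin_indep_L2 :: "((real^'n) \<times> (real^'k) \<Rightarrow> real) \<Rightarrow> ((real^'n) \<times> (real^'k) \<Rightarrow> real^'m) \<Rightarrow> bool" where
  "lin_indep_L2 p \<phi> \<longleftrightarrow>
     (\<forall>c::real^'m. (AE z in lborel. p z \<noteq> 0 \<longrightarrow> c \<bullet> \<phi> z = 0) \<longrightarrow> c = 0)"

definition Rmat :: "((real^'n) \<times> (real^'k) \<Rightarrow> real) \<Rightarrow> ((real^'n) \<times> (real^'k) \<Rightarrow> real^'l)
     \<Rightarrow> ((real^'n) \<times> (real^'k) \<Rightarrow> real^'m) \<Rightarrow> real^'m^'l" where
  "Rmat p u v = (\<chi> i j. joint_exp p (\<lambda>z. u z $ i * v z $ j))"

definition Rmat_post :: "((real^'n) \<times> (real^'k) \<Rightarrow> real) \<Rightarrow> real^'n \<Rightarrow> ((real^'n) \<times> (real^'k) \<Rightarrow> real^'l)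
     \<Rightarrow> ((real^'n) \<times> (real^'k) \<Rightarrow> real^'m) \<Rightarrow> real^'m^'l" where
  "Rmat_post p x u v = (\<chi> i j. post_exp p x (\<lambda>\<theta>. u (x, \<theta>) $ i * v (x, \<theta>) $ j))"

definition mat_marg_exp :: "((real^'n) \<times> (real^'k) \<Rightarrow> real) \<Rightarrow> (real^'n \<Rightarrow> real^'b^'a) \<Rightarrow> real^'b^'a" where
  "mat_marg_exp p A = (\<chi> i j. marg_exp p (\<lambda>x. A x $ i $ j))"

definition psd :: "real^'a^'a \<Rightarrow> bool" where
  "psd A \<longleftrightarrow> (\<forall>v. 0 \<le> v \<bullet> (A *v v))"

definition loewner_ge :: "real^'a^'a \<Rightarrow> real^'a^'a \<Rightarrow> bool" (infix "\<succeq>\<^sub>L" 50) where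
  "A \<succeq>\<^sub>L B \<longleftrightarrow> psd (A - B)"

end

theory Submission
  imports Defs
begin

text \<open>
  For fixed x write R_x = R_{g\<phi>|x} and Q_x = Q_{\<phi>|x}. For a symmetric positive definite Q,
  the quadratic form of R Q^-1 R^T is  v^T R Q^-1 R^T v = max_w (2 v^T R w - w^T Q w).
  Since \<zeta> is conditionally orthogonal to \<phi>, R_x is also the posterior cross moment of g - \<zeta>
  and \<phi>, hence  E_{\<theta>|x}[(v^T (g - \<zeta>))^2] - (2 v^T R_x w - w^T Q_x w) = E_{\<theta>|x}[(v^T (g - \<zeta>) - w^T \<phi>)^2],
  which is nonnegative; integrating over x gives the first inequality. For the second, the
  objective 2 v^T R w - w^T Q w is linear in (R, Q), and R_{g\<phi>} = E_x[R_x], Q_\<phi> = E_x[Q_x] by the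
  tower property, so the maximum of the average is at most the average of the maxima.
\<close>

section \<open>The matrix R Q^-1 R^T\<close>

text \<open>For R = E[f \<phi>^T] and Q = E[\<phi> \<phi>^T] this is the second moment of the L2-projection of f
  onto the span of \<phi>.\<close>

definition proj_moment :: "real^'m^'l \<Rightarrow> real^'m^'m \<Rightarrow> real^'l^'l" where
  "proj_moment R Q = R ** matrix_inv Q ** transpose R"

lemma loewner_geI:
  assumes "\<And>v. v \<bullet> (B *v v) \<le> v \<bullet> (A *v v)"
  shows "A \<succeq>\<^sub>L B"
  using assms by (simp add: loewner_ge_def psd_def matrix_vector_mult_diff_rdistrib inner_diff_right)

lemma loewner_geD:
  assumes "A \<succeq>\<^sub>L B"
  shows "v \<bullet> (B *v v) \<le> v \<bullet> (A *v v)"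
  using assms by (simp add: loewner_ge_def psd_def matrix_vector_mult_diff_rdistrib inner_diff_right)

lemma matrix_inv_right:
  fixes Q :: "real^'m^'m"
  assumes "invertible Q"
  shows "Q ** matrix_inv Q = mat 1"
  using someI_ex[OF assms[unfolded invertible_def]] by (auto simp: matrix_inv_def)

lemma transpose_matrix_inv_symmetric:
  fixes Q :: "real^'m^'m"
  assumes "transpose Q = Q" and "invertible Q"
  shows "transpose (matrix_inv Q) = matrix_inv Q"
proof -
  have "transpose (matrix_inv Q) ** Q = mat 1"
    by (metis assms matrix_inv_right matrix_transpose_mul transpose_mat)
  then have "transpose (matrix_inv Q) = transpose (matrix_inv Q) ** (Q ** matrix_inv Q)"
    by (simp add: matrix_inv_right[OF assms(2)])
  also have "\<dots> = matrix_inv Q"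
    by (simp add: matrix_mul_assoc \<open>transpose (matrix_inv Q) ** Q = mat 1\<close>)
  finally show ?thesis .
qed

lemma inner_matrix_vector_symmetric:
  fixes M :: "real^'m^'m"
  assumes "transpose M = M"
  shows "a \<bullet> (M *v b) = b \<bullet> (M *v a)"
  by (metis assms dot_lmul_matrix inner_commute transpose_transpose vector_transpose_matrix)

lemma symmetric_proj_moment:
  assumes "transpose Q = Q" and "invertible Q"
  shows "transpose (proj_moment R Q) = proj_moment R Q"
  using transpose_matrix_inv_symmetric[OF assms]
  by (simp add: proj_moment_def matrix_transpose_mul matrix_mul_assoc)

lemma proj_moment_ge:
  fixes Q :: "real^'m^'m" and R :: "real^'m^'l"
  assumes "transpose Q = Q" and "psd Q" and "invertible Q"
  shows "2 * (v \<bullet> (R *v w)) - w \<bullet> (Q *v w) \<le> v \<bullet> (proj_moment R Q *v v)"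
proof -
  define y where "y = matrix_inv Q *v (transpose R *v v)"
  have Qy: "Q *v y = transpose R *v v"
    by (simp add: y_def matrix_vector_mul_assoc matrix_inv_right[OF assms(3)])
  have "v \<bullet> (proj_moment R Q *v v) = (transpose R *v v) \<bullet> y"
    by (simp add: proj_moment_def y_def matrix_vector_mul_assoc[symmetric] dot_lmul_matrix[symmetric])
  then have quadratic: "v \<bullet> (proj_moment R Q *v v) = y \<bullet> (Q *v y)"
    by (simp add: Qy inner_commute)
  have cross: "v \<bullet> (R *v w) = y \<bullet> (Q *v w)"
    by (metis Qy assms(1) dot_lmul_matrix inner_matrix_vector_symmetric inner_commute vector_transpose_matrix)
  have "0 \<le> (y - w) \<bullet> (Q *v (y - w))"
    using assms(2) by (simp add: psd_def)
  also have "\<dots> = y \<bullet> (Q *v y) - 2 * (y \<bullet> (Q *v w)) + w \<bullet> (Q *v w)"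
    using inner_matrix_vector_symmetric[OF assms(1), of w y]
    by (simp add: matrix_vector_mult_diff_distrib inner_diff_left inner_diff_right)
  finally show ?thesis
    using quadratic cross by linarith
qed

lemma proj_moment_le:
  fixes Q :: "real^'m^'m" and R :: "real^'m^'l"
  assumes "invertible Q" and "\<And>w. 2 * (v \<bullet> (R *v w)) - w \<bullet> (Q *v w) \<le> s"
  shows "v \<bullet> (proj_moment R Q *v v) \<le> s"
proof -
  define y where "y = matrix_inv Q *v (transpose R *v v)"
  have Qy: "Q *v y = transpose R *v v"
    by (simp add: y_def matrix_vector_mul_assoc matrix_inv_right[OF assms(1)])
  have "v \<bullet> (proj_moment R Q *v v) = (transpose R *v v) \<bullet> y"
    by (simp add: proj_moment_def y_def matrix_vector_mul_assoc[symmetric] dot_lmul_matrix[symmetric])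
  also have "\<dots> = 2 * (v \<bullet> (R *v y)) - y \<bullet> (Q *v y)"
    by (simp add: Qy inner_commute dot_lmul_matrix[symmetric])
  also have "\<dots> \<le> s"
    by (rule assms(2))
  finally show ?thesis .
qed

lemma psd_proj_moment:
  assumes "transpose Q = Q" and "psd Q" and "invertible Q"
  shows "psd (proj_moment R Q)"
  using proj_moment_ge[OF assms, where w=0 and R=R] by (simp add: psd_def)

lemma abs_entry_le_diag_if_loewner:
  fixes M S :: "real^'m^'m"
  assumes "transpose M = M" and "psd M" and "S \<succeq>\<^sub>L M"
  shows "\<bar>M $ i $ j\<bar> \<le> (S $ i $ i + S $ j $ j) / 2"
proof -
  define a :: "real^'m" where "a = axis i 1"
  define b :: "real^'m" where "b = axis j 1"
  have entry: "axis k 1 \<bullet> (A *v axis l 1) = A $ k $ l" for A :: "real^'m^'m" and k l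
    by (simp add: matrix_vector_mult_basis column_def inner_axis')
  have sym: "b \<bullet> (M *v a) = a \<bullet> (M *v b)"
    by (rule inner_matrix_vector_symmetric[OF assms(1)])
  have "0 \<le> (a + b) \<bullet> (M *v (a + b))" "0 \<le> (a - b) \<bullet> (M *v (a - b))"
    using assms(2) by (simp_all add: psd_def)
  then have "\<bar>a \<bullet> (M *v b)\<bar> \<le> (a \<bullet> (M *v a) + b \<bullet> (M *v b)) / 2"
    using sym by (simp add: matrix_vector_right_distrib matrix_vector_mult_diff_distrib
        inner_add_left inner_add_right inner_diff_left inner_diff_right abs_le_iff)
  also have "\<dots> \<le> (a \<bullet> (S *v a) + b \<bullet> (S *v b)) / 2"
    using loewner_geD[OF assms(3), of a] loewner_geD[OF assms(3), of b] by simp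
  finally show ?thesis
    by (simp add: a_def b_def entry)
qed

section \<open>Measurability of the matrix inverse\<close>

lemma borel_measurable_det:
  fixes A :: "'a \<Rightarrow> real^'m^'m"
  assumes "\<And>i j. (\<lambda>x. A x $ i $ j) \<in> borel_measurable M"
  shows "(\<lambda>x. det (A x)) \<in> borel_measurable M"
  unfolding det_def by (intro borel_measurable_sum borel_measurable_times borel_measurable_prod
      borel_measurable_const assms)

text \<open>\<open>matrix_inv\<close> chooses from an empty set for every singular matrix, so it returns one and the
  same unspecified matrix on all of them.\<close>

lemma matrix_inv_singular:
  fixes A :: "real^'m^'m"
  assumes "\<not> invertible A"
  shows "matrix_inv A = (SOME A'. False)"
  using assms unfolding matrix_inv_def invertible_def by (metis (no_types, lifting))

lemma matrix_inv_entry_cramer: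
  fixes A :: "real^'m^'m"
  assumes "det A \<noteq> 0"
  shows "matrix_inv A $ k $ l = det (\<chi> a b. if b = k then axis l 1 $ a else A $ a $ b) / det A"
proof -
  have inv: "invertible A"
    using assms by (simp add: invertible_det_nz)
  have "A *v (matrix_inv A *v axis l 1) = axis l 1"
    by (simp add: matrix_vector_mul_assoc matrix_inv_right[OF inv])
  then have "matrix_inv A *v axis l 1 = (\<chi> k. det (\<chi> a b. if b = k then axis l 1 $ a else A $ a $ b) / det A)"
    by (rule iffD1[OF cramer[OF assms]])
  then show ?thesis
    by (simp add: vec_eq_iff matrix_vector_mult_basis column_def)
qed

lemma borel_measurable_matrix_inv:
  fixes A :: "'a \<Rightarrow> real^'m^'m"
  assumes A: "\<And>i j. (\<lambda>x. A x $ i $ j) \<in> borel_measurable M"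
  shows "(\<lambda>x. matrix_inv (A x) $ k $ l) \<in> borel_measurable M"
proof -
  define C where "C x = (\<chi> a b. if b = k then axis l 1 $ a else A x $ a $ b)" for x
  have "(\<lambda>x. matrix_inv (A x) $ k $ l)
      = (\<lambda>x. if det (A x) = 0 then (SOME A'. False) $ k $ l else det (C x) / det (A x))"
    by (auto simp: C_def matrix_inv_entry_cramer matrix_inv_singular invertible_det_nz)
  moreover have "(\<lambda>x. det (C x)) \<in> borel_measurable M"
  proof (rule borel_measurable_det)
    show "(\<lambda>x. C x $ i $ j) \<in> borel_measurable M" for i j
      by (cases "j = k") (simp_all add: C_def A)
  qed
  ultimately show ?thesis
    using borel_measurable_det[OF A] by simp
qed

lemma borel_measurable_proj_moment:
  fixes R :: "'a \<Rightarrow> real^'m^'l" and Q :: "'a \<Rightarrow> real^'m^'m"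
  assumes "\<And>i j. (\<lambda>x. R x $ i $ j) \<in> borel_measurable M"
    and "\<And>i j. (\<lambda>x. Q x $ i $ j) \<in> borel_measurable M"
  shows "(\<lambda>x. proj_moment (R x) (Q x) $ i $ j) \<in> borel_measurable M"
  unfolding proj_moment_def matrix_matrix_mult_def transpose_def
  by (simp, intro borel_measurable_sum borel_measurable_times assms borel_measurable_matrix_inv)

section \<open>Second moments with respect to a weight\<close>

definition weighted_L2 :: "'a measure \<Rightarrow> ('a \<Rightarrow> real) \<Rightarrow> ('a \<Rightarrow> real) \<Rightarrow> bool" where
  "weighted_L2 N q f \<longleftrightarrow> f \<in> borel_measurable N \<and> integrable N (\<lambda>t. q t * (f t)\<^sup>2)"

definition weighted_L2_vec :: "'a measure \<Rightarrow> ('a \<Rightarrow> real) \<Rightarrow> ('a \<Rightarrow> real^'m) \<Rightarrow> bool" where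
  "weighted_L2_vec N q f \<longleftrightarrow> (\<forall>i. weighted_L2 N q (\<lambda>t. f t $ i))"

definition mat_integral :: "'a measure \<Rightarrow> ('a \<Rightarrow> real) \<Rightarrow> ('a \<Rightarrow> real^'c^'r) \<Rightarrow> real^'c^'r" where
  "mat_integral N q A = (\<chi> i j. \<integral>t. q t * A t $ i $ j \<partial>N)"

definition moment_matrix ::
    "'a measure \<Rightarrow> ('a \<Rightarrow> real) \<Rightarrow> ('a \<Rightarrow> real^'r) \<Rightarrow> ('a \<Rightarrow> real^'c) \<Rightarrow> real^'c^'r" where
  "moment_matrix N q u v = mat_integral N q (\<lambda>t. \<chi> i j. u t $ i * v t $ j)"

lemma transpose_moment_matrix: "transpose (moment_matrix N q u v) = moment_matrix N q v u"
  by (simp add: moment_matrix_def mat_integral_def transpose_def mult.commute)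

locale nonneg_weight =
  fixes N :: "'a measure" and q :: "'a \<Rightarrow> real"
  assumes weight_measurable: "q \<in> borel_measurable N"
    and weight_nonneg: "\<And>t. 0 \<le> q t"
begin

lemma weighted_L2_integrable_mult:
  assumes f: "weighted_L2 N q f" and h: "weighted_L2 N q h"
  shows "integrable N (\<lambda>t. q t * (f t * h t))"
proof (rule Bochner_Integration.integrable_bound)
  show "integrable N (\<lambda>t. q t * (f t)\<^sup>2 + q t * (h t)\<^sup>2)"
    using f h by (simp add: weighted_L2_def)
  show "(\<lambda>t. q t * (f t * h t)) \<in> borel_measurable N"
    using f h weight_measurable unfolding weighted_L2_def by auto
  have "2 * \<bar>f t * h t\<bar> \<le> (f t)\<^sup>2 + (h t)\<^sup>2" for t
    using sum_squares_bound[of "\<bar>f t\<bar>" "\<bar>h t\<bar>"] by (simp add: abs_mult mult.assoc)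
  then have "\<bar>f t * h t\<bar> \<le> (f t)\<^sup>2 + (h t)\<^sup>2" for t
    by (smt (verit) abs_ge_zero)
  then show "AE t in N. norm (q t * (f t * h t)) \<le> norm (q t * (f t)\<^sup>2 + q t * (h t)\<^sup>2)"
    using weight_nonneg by (intro AE_I2) (simp add: abs_mult mult_left_mono distrib_left[symmetric])
qed

lemma weighted_L2_add:
  assumes f: "weighted_L2 N q f" and h: "weighted_L2 N q h"
  shows "weighted_L2 N q (\<lambda>t. f t + h t)"
proof -
  have expand: "q t * (f t + h t)\<^sup>2 = q t * (f t)\<^sup>2 + 2 * (q t * (f t * h t)) + q t * (h t)\<^sup>2" for t
    by (simp add: power2_sum algebra_simps)
  have "integrable N (\<lambda>t. q t * (f t + h t)\<^sup>2)"
    unfolding expand using f h weighted_L2_integrable_mult[OF f h] by (simp add: weighted_L2_def)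
  then show ?thesis
    using f h by (auto simp: weighted_L2_def)
qed

lemma weighted_L2_cmult:
  assumes "weighted_L2 N q f"
  shows "weighted_L2 N q (\<lambda>t. c * f t)"
proof -
  have "integrable N (\<lambda>t. c\<^sup>2 * (q t * (f t)\<^sup>2))"
    using assms by (simp add: weighted_L2_def)
  then show ?thesis
    using assms by (auto simp: weighted_L2_def power_mult_distrib mult.left_commute)
qed

lemma weighted_L2_vec_diff:
  assumes "weighted_L2_vec N q f" and "weighted_L2_vec N q h"
  shows "weighted_L2_vec N q (\<lambda>t. f t - h t)"
  unfolding weighted_L2_vec_def
proof
  fix i
  have "weighted_L2 N q (\<lambda>t. f t $ i + (-1) * h t $ i)"
    using assms by (intro weighted_L2_add weighted_L2_cmult) (simp_all add: weighted_L2_vec_def)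
  then show "weighted_L2 N q (\<lambda>t. (f t - h t) $ i)"
    by simp
qed

lemma mat_integral_bilinear:
  assumes "\<And>i j. integrable N (\<lambda>t. q t * A t $ i $ j)"
  shows "v \<bullet> (mat_integral N q A *v w) = (\<integral>t. q t * (v \<bullet> (A t *v w)) \<partial>N)"
    and "integrable N (\<lambda>t. q t * (v \<bullet> (A t *v w)))"
proof -
  have expand: "q t * (v \<bullet> (A t *v w)) = (\<Sum>i\<in>UNIV. \<Sum>j\<in>UNIV. v $ i * w $ j * (q t * A t $ i $ j))" for t
    by (simp add: inner_vec_def matrix_vector_mult_def sum_distrib_left ac_simps)
  show "integrable N (\<lambda>t. q t * (v \<bullet> (A t *v w)))"
    unfolding expand using assms by simp
  have "v \<bullet> (mat_integral N q A *v w)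
      = (\<Sum>i\<in>UNIV. \<Sum>j\<in>UNIV. v $ i * w $ j * (\<integral>t. q t * A t $ i $ j \<partial>N))"
    by (simp add: mat_integral_def inner_vec_def matrix_vector_mult_def sum_distrib_left ac_simps)
  also have "\<dots> = (\<integral>t. q t * (v \<bullet> (A t *v w)) \<partial>N)"
    unfolding expand using assms by simp
  finally show "v \<bullet> (mat_integral N q A *v w) = (\<integral>t. q t * (v \<bullet> (A t *v w)) \<partial>N)" .
qed

lemma moment_matrix_bilinear:
  assumes u: "weighted_L2_vec N q u" and v: "weighted_L2_vec N q v"
  shows "a \<bullet> (moment_matrix N q u v *v b) = (\<integral>t. q t * ((a \<bullet> u t) * (b \<bullet> v t)) \<partial>N)"
    and "integrable N (\<lambda>t. q t * ((a \<bullet> u t) * (b \<bullet> v t)))"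
proof -
  have outer: "a \<bullet> ((\<chi> i j. u t $ i * v t $ j) *v b) = (a \<bullet> u t) * (b \<bullet> v t)" for t
    by (simp add: inner_vec_def matrix_vector_mult_def sum_distrib_left sum_distrib_right ac_simps)
      (rule sum.swap)
  have "integrable N (\<lambda>t. q t * (\<chi> i j. u t $ i * v t $ j) $ i $ j)" for i j
    using u v by (simp add: weighted_L2_vec_def weighted_L2_integrable_mult)
  from mat_integral_bilinear[OF this, of a b] show
    "a \<bullet> (moment_matrix N q u v *v b) = (\<integral>t. q t * ((a \<bullet> u t) * (b \<bullet> v t)) \<partial>N)"
    "integrable N (\<lambda>t. q t * ((a \<bullet> u t) * (b \<bullet> v t)))"
    by (simp_all only: moment_matrix_def outer)
qed

lemma psd_moment_matrix:
  assumes "weighted_L2_vec N q u"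
  shows "psd (moment_matrix N q u u)"
  unfolding psd_def moment_matrix_bilinear[OF assms assms]
  by (auto intro!: integral_nonneg_AE simp: weight_nonneg)

lemma invertible_moment_matrix:
  assumes \<phi>: "weighted_L2_vec N q \<phi>"
    and indep: "\<And>c. (AE t in N. q t \<noteq> 0 \<longrightarrow> c \<bullet> \<phi> t = 0) \<Longrightarrow> c = 0"
  shows "invertible (moment_matrix N q \<phi> \<phi>)"
proof -
  have "c = 0" if "moment_matrix N q \<phi> \<phi> *v c = 0" for c
  proof (rule indep)
    have "(\<integral>t. q t * ((c \<bullet> \<phi> t) * (c \<bullet> \<phi> t)) \<partial>N) = 0"
      using that moment_matrix_bilinear(1)[OF \<phi> \<phi>, of c c] by simp
    then have "AE t in N. q t * ((c \<bullet> \<phi> t) * (c \<bullet> \<phi> t)) = 0"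
      using integral_nonneg_eq_0_iff_AE[OF moment_matrix_bilinear(2)[OF \<phi> \<phi>]] weight_nonneg by simp
    then show "AE t in N. q t \<noteq> 0 \<longrightarrow> c \<bullet> \<phi> t = 0"
      by eventually_elim auto
  qed
  then show ?thesis
    by (simp add: invertible_left_inverse matrix_left_invertible_ker)
qed

lemma moment_matrix_diff_left:
  assumes "weighted_L2_vec N q f" and "weighted_L2_vec N q z" and "weighted_L2_vec N q \<phi>"
  shows "moment_matrix N q (\<lambda>t. f t - z t) \<phi> = moment_matrix N q f \<phi> - moment_matrix N q z \<phi>"
  using assms
  by (simp add: moment_matrix_def mat_integral_def vec_eq_iff weighted_L2_vec_def
      left_diff_distrib right_diff_distrib weighted_L2_integrable_mult)

lemma moment_matrix_ge_proj_moment: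
  assumes f: "weighted_L2_vec N q f" and z: "weighted_L2_vec N q z" and \<phi>: "weighted_L2_vec N q \<phi>"
    and orth: "moment_matrix N q z \<phi> = 0"
    and inv: "invertible (moment_matrix N q \<phi> \<phi>)"
  shows "moment_matrix N q (\<lambda>t. f t - z t) (\<lambda>t. f t - z t)
     \<succeq>\<^sub>L proj_moment (moment_matrix N q f \<phi>) (moment_matrix N q \<phi> \<phi>)"
proof (rule loewner_geI, rule proj_moment_le[OF inv])
  fix v w
  define e where "e = (\<lambda>t. f t - z t)"
  have e: "weighted_L2_vec N q e"
    unfolding e_def using f z by (rule weighted_L2_vec_diff)
  have R: "moment_matrix N q f \<phi> = moment_matrix N q e \<phi>"
    using moment_matrix_diff_left[OF f z \<phi>] orth by (simp add: e_def)
  note ee = moment_matrix_bilinear[OF e e, of v v]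
    and e\<phi> = moment_matrix_bilinear[OF e \<phi>, of v w]
    and \<phi>\<phi> = moment_matrix_bilinear[OF \<phi> \<phi>, of w w]
  have "v \<bullet> (moment_matrix N q e e *v v) - (2 * (v \<bullet> (moment_matrix N q e \<phi> *v w))
      - w \<bullet> (moment_matrix N q \<phi> \<phi> *v w)) = (\<integral>t. q t * (v \<bullet> e t - w \<bullet> \<phi> t)\<^sup>2 \<partial>N)"
  proof -
    have "q t * (v \<bullet> e t - w \<bullet> \<phi> t)\<^sup>2 = q t * ((v \<bullet> e t) * (v \<bullet> e t))
        - 2 * (q t * ((v \<bullet> e t) * (w \<bullet> \<phi> t))) + q t * ((w \<bullet> \<phi> t) * (w \<bullet> \<phi> t))" for t
      by (simp add: power2_eq_square algebra_simps)
    then show ?thesis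
      using ee e\<phi> \<phi>\<phi> by simp
  qed
  also have "\<dots> \<ge> 0"
    by (rule integral_nonneg_AE) (simp add: weight_nonneg)
  finally show "2 * (v \<bullet> (moment_matrix N q f \<phi> *v w)) - w \<bullet> (moment_matrix N q \<phi> \<phi> *v w)
      \<le> v \<bullet> (moment_matrix N q (\<lambda>t. f t - z t) (\<lambda>t. f t - z t) *v v)"
    by (simp add: R e_def[symmetric])
qed

lemma weighted_integral_mono_AE:
  assumes "integrable N (\<lambda>t. q t * a t)" and "integrable N (\<lambda>t. q t * b t)"
    and "AE t in N. 0 < q t \<longrightarrow> a t \<le> b t"
  shows "(\<integral>t. q t * a t \<partial>N) \<le> (\<integral>t. q t * b t \<partial>N)"
  using assms(1,2)
proof (rule integral_mono_AE)
  show "AE t in N. q t * a t \<le> q t * b t"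
    using assms(3) by eventually_elim (metis less_eq_real_def mult_left_mono mult_zero_left weight_nonneg)
qed

lemma mat_integral_mono:
  assumes "\<And>i j. integrable N (\<lambda>t. q t * A t $ i $ j)" and "\<And>i j. integrable N (\<lambda>t. q t * B t $ i $ j)"
    and "AE t in N. 0 < q t \<longrightarrow> A t \<succeq>\<^sub>L B t"
  shows "mat_integral N q A \<succeq>\<^sub>L mat_integral N q B"
proof (rule loewner_geI)
  fix v
  show "v \<bullet> (mat_integral N q B *v v) \<le> v \<bullet> (mat_integral N q A *v v)"
    unfolding mat_integral_bilinear[OF assms(1)] mat_integral_bilinear[OF assms(2)]
    using assms(3)
    by (intro weighted_integral_mono_AE mat_integral_bilinear assms) (auto elim!: AE_mp intro: loewner_geD)
qed

text \<open>Jensen's inequality for the jointly convex map (R, Q) \<mapsto> R Q^-1 R^T.\<close>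

lemma mat_integral_proj_moment_ge:
  fixes R :: "'a \<Rightarrow> real^'m^'l" and Q :: "'a \<Rightarrow> real^'m^'m"
  assumes R: "\<And>i j. integrable N (\<lambda>t. q t * R t $ i $ j)"
    and Q: "\<And>i j. integrable N (\<lambda>t. q t * Q t $ i $ j)"
    and M: "\<And>i j. integrable N (\<lambda>t. q t * proj_moment (R t) (Q t) $ i $ j)"
    and local: "AE t in N. 0 < q t \<longrightarrow> transpose (Q t) = Q t \<and> psd (Q t) \<and> invertible (Q t)"
    and inv: "invertible (mat_integral N q Q)"
  shows "mat_integral N q (\<lambda>t. proj_moment (R t) (Q t))
     \<succeq>\<^sub>L proj_moment (mat_integral N q R) (mat_integral N q Q)"
proof (rule loewner_geI, rule proj_moment_le[OF inv])
  fix v w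
  have split: "q t * (2 * a - b) = 2 * (q t * a) - q t * b" for t a b
    by (simp add: algebra_simps)
  have "2 * (v \<bullet> (mat_integral N q R *v w)) - w \<bullet> (mat_integral N q Q *v w)
      = (\<integral>t. q t * (2 * (v \<bullet> (R t *v w)) - w \<bullet> (Q t *v w)) \<partial>N)"
    unfolding split using mat_integral_bilinear[OF R, of v w] mat_integral_bilinear[OF Q, of w w]
    by simp
  also have "\<dots> \<le> (\<integral>t. q t * (v \<bullet> (proj_moment (R t) (Q t) *v v)) \<partial>N)"
  proof (rule weighted_integral_mono_AE)
    show "integrable N (\<lambda>t. q t * (2 * (v \<bullet> (R t *v w)) - w \<bullet> (Q t *v w)))"
      unfolding split using mat_integral_bilinear(2)[OF R, of v w] mat_integral_bilinear(2)[OF Q, of w w]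
      by simp
    show "integrable N (\<lambda>t. q t * (v \<bullet> (proj_moment (R t) (Q t) *v v)))"
      by (rule mat_integral_bilinear(2)[OF M])
    show "AE t in N. 0 < q t \<longrightarrow> 2 * (v \<bullet> (R t *v w)) - w \<bullet> (Q t *v w)
        \<le> v \<bullet> (proj_moment (R t) (Q t) *v v)"
      using local by eventually_elim (blast intro: proj_moment_ge)
  qed
  also have "\<dots> = v \<bullet> (mat_integral N q (\<lambda>t. proj_moment (R t) (Q t)) *v v)"
    by (rule mat_integral_bilinear(1)[OF M, symmetric])
  finally show "2 * (v \<bullet> (mat_integral N q R *v w)) - w \<bullet> (mat_integral N q Q *v w)
      \<le> v \<bullet> (mat_integral N q (\<lambda>t. proj_moment (R t) (Q t)) *v v)" .
qed

lemma integrable_entry_if_loewner_dominated: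
  fixes A S :: "'a \<Rightarrow> real^'m^'m"
  assumes A: "\<And>i j. (\<lambda>t. A t $ i $ j) \<in> borel_measurable N"
    and S: "\<And>i. integrable N (\<lambda>t. q t * S t $ i $ i)"
    and dominated: "AE t in N. 0 < q t \<longrightarrow> transpose (A t) = A t \<and> psd (A t) \<and> S t \<succeq>\<^sub>L A t"
  shows "integrable N (\<lambda>t. q t * A t $ i $ j)"
proof (rule Bochner_Integration.integrable_bound)
  show "integrable N (\<lambda>t. (q t * S t $ i $ i + q t * S t $ j $ j) / 2)"
    using S by simp
  show "(\<lambda>t. q t * A t $ i $ j) \<in> borel_measurable N"
    using A weight_measurable by simp
  show "AE t in N. norm (q t * A t $ i $ j) \<le> norm ((q t * S t $ i $ i + q t * S t $ j $ j) / 2)"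
    using dominated
  proof eventually_elim
    case (elim t)
    have "\<bar>q t * A t $ i $ j\<bar> \<le> q t * ((S t $ i $ i + S t $ j $ j) / 2)"
      using elim abs_entry_le_diag_if_loewner weight_nonneg[of t]
      by (cases "q t = 0") (auto simp: abs_mult intro: mult_left_mono)
    then show ?case
      by (simp add: distrib_left)
  qed
qed

end

section \<open>Joint densities and their posteriors\<close>

lemma borel_measurable_section:
  fixes h :: "'a::euclidean_space \<times> 'b::euclidean_space \<Rightarrow> real"
  assumes "h \<in> borel_measurable lborel"
  shows "(\<lambda>y. h (x, y)) \<in> borel_measurable lborel"
  using assms by (simp add: lborel_prod[symmetric])

lemma Rmat_eq_moment_matrix: "Rmat p u v = moment_matrix lborel p u v"
  by (simp add: Rmat_def moment_matrix_def mat_integral_def joint_exp_def)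

lemma Rmat_post_eq_moment_matrix:
  "Rmat_post p x u v = moment_matrix lborel (\<lambda>\<theta>. p (x, \<theta>) / marg p x) (\<lambda>\<theta>. u (x, \<theta>)) (\<lambda>\<theta>. v (x, \<theta>))"
  by (simp add: Rmat_post_def moment_matrix_def mat_integral_def post_exp_def)

lemma mat_marg_exp_eq_mat_integral: "mat_marg_exp p A = mat_integral lborel (marg p) A"
  by (simp add: mat_marg_exp_def mat_integral_def marg_exp_def)

lemma weighted_L2_vec_if_W2:
  assumes "\<And>l. W2 p (\<lambda>z. u z $ l)"
  shows "weighted_L2_vec lborel p u"
  using assms by (simp add: W2_def weighted_L2_vec_def weighted_L2_def)

locale joint_density =
  fixes p :: "(real^'n) \<times> (real^'k) \<Rightarrow> real"
  assumes density_measurable: "p \<in> borel_measurable lborel"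
    and density_nonneg: "\<And>z. 0 \<le> p z"
    and density_integrable: "integrable lborel p"
begin

sublocale joint: nonneg_weight lborel p
  using density_measurable density_nonneg by unfold_locales

lemma density_measurable_pair: "p \<in> borel_measurable (lborel \<Otimes>\<^sub>M lborel)"
  using density_measurable by (simp add: lborel_prod)

lemma borel_measurable_marg: "marg p \<in> borel_measurable lborel"
  unfolding marg_def[abs_def]
  by (rule lborel.borel_measurable_lebesgue_integral) (simp add: density_measurable_pair)

lemma marg_nonneg: "0 \<le> marg p x"
  unfolding marg_def by (rule integral_nonneg_AE) (simp add: density_nonneg)

sublocale marginal: nonneg_weight lborel "marg p"
  using borel_measurable_marg marg_nonneg by unfold_locales

lemma posterior_weight: "nonneg_weight lborel (\<lambda>\<theta>. p (x, \<theta>) / marg p x)"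
proof
  show "(\<lambda>\<theta>. p (x, \<theta>) / marg p x) \<in> borel_measurable lborel"
    by (rule borel_measurable_divide[OF borel_measurable_section[OF density_measurable] borel_measurable_const])
  show "0 \<le> p (x, \<theta>) / marg p x" for \<theta>
    by (simp add: density_nonneg marg_nonneg)
qed

lemma AE_posterior_weighted_L2_vec:
  assumes "\<And>l. W2 p (\<lambda>z. u z $ l)"
  shows "AE x in lborel. x \<in> support p \<longrightarrow>
    weighted_L2_vec lborel (\<lambda>\<theta>. p (x, \<theta>) / marg p x) (\<lambda>\<theta>. u (x, \<theta>))"
proof -
  have "AE x in lborel. \<forall>l. x \<in> support p \<longrightarrow>
      integrable lborel (\<lambda>\<theta>. p (x, \<theta>) / marg p x * (u (x, \<theta>) $ l)\<^sup>2)"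
    using assms by (intro AE_all_countable[THEN iffD2]) (simp add: W2_def)
  moreover have "(\<lambda>\<theta>. u (x, \<theta>) $ l) \<in> borel_measurable lborel" for x l
    by (rule borel_measurable_section) (use assms in \<open>simp add: W2_def\<close>)
  ultimately show ?thesis
    by (auto elim!: AE_mp simp: weighted_L2_vec_def weighted_L2_def)
qed

lemma marg_mult_post_exp:
  assumes "integrable lborel (\<lambda>\<theta>. p (x, \<theta>))"
  shows "marg p x * post_exp p x f = (\<integral>\<theta>. p (x, \<theta>) * f \<theta> \<partial>lborel)"
proof (cases "marg p x = 0")
  case True
  then have "AE \<theta> in lborel. p (x, \<theta>) = 0"
    using integral_nonneg_eq_0_iff_AE[OF assms] density_nonneg by (simp add: marg_def)
  then have "(\<integral>\<theta>. p (x, \<theta>) * f \<theta> \<partial>lborel) = 0"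
    by (intro integral_eq_zero_AE) auto
  then show ?thesis
    using True by simp
next
  case False
  have "post_exp p x f = (\<integral>\<theta>. p (x, \<theta>) * f \<theta> / marg p x \<partial>lborel)"
    by (simp add: post_exp_def field_simps)
  also have "\<dots> = (\<integral>\<theta>. p (x, \<theta>) * f \<theta> \<partial>lborel) / marg p x"
    by (rule integral_divide_zero)
  finally show ?thesis
    using False by simp
qed

lemma borel_measurable_post_exp:
  assumes "h \<in> borel_measurable lborel"
  shows "(\<lambda>x. post_exp p x (\<lambda>\<theta>. h (x, \<theta>))) \<in> borel_measurable lborel"
proof -
  have "h \<in> borel_measurable (lborel \<Otimes>\<^sub>M lborel)"
    using assms by (simp add: lborel_prod)
  then have "(\<lambda>z. p z / marg p (fst z) * h z) \<in> borel_measurable (lborel \<Otimes>\<^sub>M lborel)"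
    using density_measurable_pair borel_measurable_marg
    by (intro borel_measurable_times borel_measurable_divide measurable_compose[OF measurable_fst])
  then show ?thesis
    unfolding post_exp_def by (intro lborel.borel_measurable_lebesgue_integral) (simp add: case_prod_beta')
qed

lemma
  assumes h: "h \<in> borel_measurable lborel" and ph: "integrable lborel (\<lambda>z. p z * h z)"
  shows integrable_marg_mult_post_exp: "integrable lborel (\<lambda>x. marg p x * post_exp p x (\<lambda>\<theta>. h (x, \<theta>)))"
    and joint_exp_eq_marg_exp_post_exp: "joint_exp p h = marg_exp p (\<lambda>x. post_exp p x (\<lambda>\<theta>. h (x, \<theta>)))"
proof -
  have ph2: "integrable (lborel \<Otimes>\<^sub>M lborel) (\<lambda>z. p z * h z)"
    using ph by (simp add: lborel_prod)
  have sections: "AE x in lborel. integrable lborel (\<lambda>\<theta>. p (x, \<theta>))"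
    using lborel_pair.AE_integrable_fst'[of p] density_integrable by (simp add: lborel_prod)
  then have inner: "AE x in lborel.
      (\<integral>\<theta>. p (x, \<theta>) * h (x, \<theta>) \<partial>lborel) = marg p x * post_exp p x (\<lambda>\<theta>. h (x, \<theta>))"
    by eventually_elim (simp add: marg_mult_post_exp)
  have measurable: "(\<lambda>x. marg p x * post_exp p x (\<lambda>\<theta>. h (x, \<theta>))) \<in> borel_measurable lborel"
    using borel_measurable_marg borel_measurable_post_exp[OF h] by simp
  show "integrable lborel (\<lambda>x. marg p x * post_exp p x (\<lambda>\<theta>. h (x, \<theta>)))"
    using integrable_cong_AE_imp[OF lborel_pair.integrable_fst'[OF ph2] measurable] inner by simp
  have "joint_exp p h = (\<integral>x. (\<integral>\<theta>. p (x, \<theta>) * h (x, \<theta>) \<partial>lborel) \<partial>lborel)"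
    using lborel_pair.integral_fst'[OF ph2] by (simp add: joint_exp_def lborel_prod)
  also have "\<dots> = marg_exp p (\<lambda>x. post_exp p x (\<lambda>\<theta>. h (x, \<theta>)))"
    unfolding marg_exp_def
    using borel_measurable_integrable[OF lborel_pair.integrable_fst'[OF ph2]] measurable inner
    by (intro integral_cong_AE) simp_all
  finally show "joint_exp p h = marg_exp p (\<lambda>x. post_exp p x (\<lambda>\<theta>. h (x, \<theta>)))" .
qed

lemma
  assumes u: "weighted_L2_vec lborel p u" and v: "weighted_L2_vec lborel p v"
  shows Rmat_eq_mat_marg_exp_Rmat_post: "Rmat p u v = mat_marg_exp p (\<lambda>x. Rmat_post p x u v)"
    and integrable_marg_mult_Rmat_post: "integrable lborel (\<lambda>x. marg p x * Rmat_post p x u v $ i $ j)"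
    and borel_measurable_Rmat_post: "(\<lambda>x. Rmat_post p x u v $ i $ j) \<in> borel_measurable lborel"
proof -
  have measurable: "(\<lambda>z. u z $ i * v z $ j) \<in> borel_measurable lborel" for i j
    using u v by (intro borel_measurable_times) (auto simp: weighted_L2_vec_def weighted_L2_def)
  have integrable: "integrable lborel (\<lambda>z. p z * (u z $ i * v z $ j))" for i j
    using u v by (simp add: weighted_L2_vec_def joint.weighted_L2_integrable_mult)
  show "Rmat p u v = mat_marg_exp p (\<lambda>x. Rmat_post p x u v)"
    using joint_exp_eq_marg_exp_post_exp[OF measurable integrable]
    by (simp add: Rmat_def Rmat_post_def mat_marg_exp_def)
  show "integrable lborel (\<lambda>x. marg p x * Rmat_post p x u v $ i $ j)"
    using integrable_marg_mult_post_exp[OF measurable integrable] by (simp add: Rmat_post_def)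
  show "(\<lambda>x. Rmat_post p x u v $ i $ j) \<in> borel_measurable lborel"
    using borel_measurable_post_exp[OF measurable] by (simp add: Rmat_post_def)
qed

lemma transpose_Rmat_post: "transpose (Rmat_post p x u v) = Rmat_post p x v u"
  by (simp add: Rmat_post_eq_moment_matrix transpose_moment_matrix)

lemma AE_psd_Rmat_post:
  assumes "\<And>m. W2 p (\<lambda>z. \<phi> z $ m)"
  shows "AE x in lborel. x \<in> support p \<longrightarrow> psd (Rmat_post p x \<phi> \<phi>)"
  using AE_posterior_weighted_L2_vec[OF assms]
proof eventually_elim
  case (elim x)
  then show ?case
    by (auto simp: Rmat_post_eq_moment_matrix intro!: nonneg_weight.psd_moment_matrix[OF posterior_weight])
qed

lemma AE_proj_moment_le_Rmat_post_diff:
  assumes f: "\<And>l. W2 p (\<lambda>z. f z $ l)" and z: "\<And>l. W2 p (\<lambda>z. \<zeta> z $ l)"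
    and \<phi>: "\<And>m. W2 p (\<lambda>z. \<phi> z $ m)"
    and orth: "AE x in lborel. x \<in> support p \<longrightarrow> Rmat_post p x \<zeta> \<phi> = 0"
    and inv: "AE x in lborel. x \<in> support p \<longrightarrow> invertible (Rmat_post p x \<phi> \<phi>)"
  shows "AE x in lborel. x \<in> support p \<longrightarrow>
    Rmat_post p x (\<lambda>z. f z - \<zeta> z) (\<lambda>z. f z - \<zeta> z) \<succeq>\<^sub>L proj_moment (Rmat_post p x f \<phi>) (Rmat_post p x \<phi> \<phi>)"
  using AE_posterior_weighted_L2_vec[OF f] AE_posterior_weighted_L2_vec[OF z]
    AE_posterior_weighted_L2_vec[OF \<phi>] orth inv
proof eventually_elim
  case (elim x)
  show ?case
  proof
    assume "x \<in> support p"
    with elim show "Rmat_post p x (\<lambda>z. f z - \<zeta> z) (\<lambda>z. f z - \<zeta> z)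
        \<succeq>\<^sub>L proj_moment (Rmat_post p x f \<phi>) (Rmat_post p x \<phi> \<phi>)"
      unfolding Rmat_post_eq_moment_matrix
      by (intro nonneg_weight.moment_matrix_ge_proj_moment[OF posterior_weight]) auto
  qed
qed

lemma AE_proj_moment_le_Rmat_post:
  assumes f: "\<And>l. W2 p (\<lambda>z. f z $ l)" and \<phi>: "\<And>m. W2 p (\<lambda>z. \<phi> z $ m)"
    and inv: "AE x in lborel. x \<in> support p \<longrightarrow> invertible (Rmat_post p x \<phi> \<phi>)"
  shows "AE x in lborel. x \<in> support p \<longrightarrow>
    Rmat_post p x f f \<succeq>\<^sub>L proj_moment (Rmat_post p x f \<phi>) (Rmat_post p x \<phi> \<phi>)"
proof -
  have "AE x in lborel. x \<in> support p \<longrightarrow> Rmat_post p x (\<lambda>z. f z - 0) (\<lambda>z. f z - 0)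
      \<succeq>\<^sub>L proj_moment (Rmat_post p x f \<phi>) (Rmat_post p x \<phi> \<phi>)"
    by (rule AE_proj_moment_le_Rmat_post_diff[OF f _ \<phi> _ inv])
      (simp_all add: W2_def Rmat_post_def post_exp_def vec_eq_iff)
  then show ?thesis
    by simp
qed

lemma integrable_marg_mult_proj_moment:
  assumes f: "\<And>l. W2 p (\<lambda>z. f z $ l)" and \<phi>: "\<And>m. W2 p (\<lambda>z. \<phi> z $ m)"
    and inv: "AE x in lborel. x \<in> support p \<longrightarrow> invertible (Rmat_post p x \<phi> \<phi>)"
  shows "integrable lborel (\<lambda>x. marg p x * proj_moment (Rmat_post p x f \<phi>) (Rmat_post p x \<phi> \<phi>) $ i $ j)"
proof (rule marginal.integrable_entry_if_loewner_dominated)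
  note f' = weighted_L2_vec_if_W2[OF f] and \<phi>' = weighted_L2_vec_if_W2[OF \<phi>]
  show "(\<lambda>x. proj_moment (Rmat_post p x f \<phi>) (Rmat_post p x \<phi> \<phi>) $ i $ j) \<in> borel_measurable lborel" for i j
    by (intro borel_measurable_proj_moment borel_measurable_Rmat_post f' \<phi>')
  show "integrable lborel (\<lambda>x. marg p x * Rmat_post p x f f $ i $ i)" for i
    by (rule integrable_marg_mult_Rmat_post[OF f' f'])
  show "AE x in lborel. 0 < marg p x \<longrightarrow>
      transpose (proj_moment (Rmat_post p x f \<phi>) (Rmat_post p x \<phi> \<phi>)) = proj_moment (Rmat_post p x f \<phi>) (Rmat_post p x \<phi> \<phi>)
      \<and> psd (proj_moment (Rmat_post p x f \<phi>) (Rmat_post p x \<phi> \<phi>))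
      \<and> Rmat_post p x f f \<succeq>\<^sub>L proj_moment (Rmat_post p x f \<phi>) (Rmat_post p x \<phi> \<phi>)"
    using AE_psd_Rmat_post[OF \<phi>] AE_proj_moment_le_Rmat_post[OF f \<phi> inv] inv
    by eventually_elim (simp add: support_def transpose_Rmat_post symmetric_proj_moment psd_proj_moment)
qed

lemma Rmat_diff_ge_mat_marg_exp_proj_moment:
  assumes f: "\<And>l. W2 p (\<lambda>z. f z $ l)" and z: "\<And>l. W2 p (\<lambda>z. \<zeta> z $ l)"
    and \<phi>: "\<And>m. W2 p (\<lambda>z. \<phi> z $ m)"
    and orth: "AE x in lborel. x \<in> support p \<longrightarrow> Rmat_post p x \<zeta> \<phi> = 0"
    and inv: "AE x in lborel. x \<in> support p \<longrightarrow> invertible (Rmat_post p x \<phi> \<phi>)"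
  shows "Rmat p (\<lambda>z. f z - \<zeta> z) (\<lambda>z. f z - \<zeta> z)
    \<succeq>\<^sub>L mat_marg_exp p (\<lambda>x. proj_moment (Rmat_post p x f \<phi>) (Rmat_post p x \<phi> \<phi>))"
proof -
  have e: "weighted_L2_vec lborel p (\<lambda>z. f z - \<zeta> z)"
    using f z by (simp add: weighted_L2_vec_if_W2 joint.weighted_L2_vec_diff)
  show ?thesis
    unfolding Rmat_eq_mat_marg_exp_Rmat_post[OF e e] mat_marg_exp_eq_mat_integral
    using AE_proj_moment_le_Rmat_post_diff[OF f z \<phi> orth inv]
    by (intro marginal.mat_integral_mono integrable_marg_mult_Rmat_post[OF e e]
        integrable_marg_mult_proj_moment[OF f \<phi> inv]) (simp add: support_def)
qed

lemma mat_marg_exp_proj_moment_ge_proj_moment: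
  assumes f: "\<And>l. W2 p (\<lambda>z. f z $ l)" and \<phi>: "\<And>m. W2 p (\<lambda>z. \<phi> z $ m)"
    and indep: "lin_indep_L2 p \<phi>"
    and inv: "AE x in lborel. x \<in> support p \<longrightarrow> invertible (Rmat_post p x \<phi> \<phi>)"
  shows "mat_marg_exp p (\<lambda>x. proj_moment (Rmat_post p x f \<phi>) (Rmat_post p x \<phi> \<phi>))
    \<succeq>\<^sub>L proj_moment (Rmat p f \<phi>) (Rmat p \<phi> \<phi>)"
proof -
  note f' = weighted_L2_vec_if_W2[OF f] and \<phi>' = weighted_L2_vec_if_W2[OF \<phi>]
  have "invertible (Rmat p \<phi> \<phi>)"
    using joint.invertible_moment_matrix[OF \<phi>'] indep by (simp add: Rmat_eq_moment_matrix lin_indep_L2_def)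
  then show ?thesis
    unfolding Rmat_eq_mat_marg_exp_Rmat_post[OF f' \<phi>'] Rmat_eq_mat_marg_exp_Rmat_post[OF \<phi>' \<phi>']
      mat_marg_exp_eq_mat_integral
    using AE_psd_Rmat_post[OF \<phi>] inv
    by (intro marginal.mat_integral_proj_moment_ge integrable_marg_mult_Rmat_post f' \<phi>'
        integrable_marg_mult_proj_moment[OF f \<phi> inv])
      (auto simp: support_def transpose_Rmat_post elim: AE_mp)
qed

end

theorem theorem2:
  fixes p :: "(real^'n) \<times> (real^'k) \<Rightarrow> real"
    and X :: "(real^'n) set" and \<Theta> :: "(real^'k) set"
    and g :: "(real^'n) \<times> (real^'k) \<Rightarrow> real^'l"
    and \<phi> :: "(real^'n) \<times> (real^'k) \<Rightarrow> real^'m"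
    and \<zeta> :: "(real^'n) \<times> (real^'k) \<Rightarrow> real^'l"
  assumes p_meas: "p \<in> borel_measurable lborel"
    and p_nonneg: "\<And>z. 0 \<le> p z"
    and p_supp: "\<And>z. z \<notin> X \<times> \<Theta> \<Longrightarrow> p z = 0"
    and p_int: "integrable lborel p"
    and p_one: "(\<integral>z. p z \<partial>lborel) = 1"
    and g_W2: "\<And>l. W2 p (\<lambda>z. g z $ l)"
    and phi_W2: "\<And>m. W2 p (\<lambda>z. \<phi> z $ m)"
    and phi_indep: "lin_indep_L2 p \<phi>"
    and zeta_W2: "\<And>l. W2 p (\<lambda>z. \<zeta> z $ l)"
    and zeta_orth: "\<And>l. AE x in lborel. x \<in> support p \<longrightarrow>
        (\<forall>m. post_exp p x (\<lambda>\<theta>. \<zeta> (x, \<theta>) $ l * \<phi> (x, \<theta>) $ m) = 0)"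
    and Q_inv: "AE x in lborel. x \<in> support p \<longrightarrow> invertible (Rmat_post p x \<phi> \<phi>)"
  shows "Rmat p (\<lambda>z. g z - \<zeta> z) (\<lambda>z. g z - \<zeta> z) \<succeq>\<^sub>L
           mat_marg_exp p (\<lambda>x. Rmat_post p x g \<phi> ** matrix_inv (Rmat_post p x \<phi> \<phi>)
                                 ** transpose (Rmat_post p x g \<phi>))
       \<and> mat_marg_exp p (\<lambda>x. Rmat_post p x g \<phi> ** matrix_inv (Rmat_post p x \<phi> \<phi>)
                                 ** transpose (Rmat_post p x g \<phi>))
         \<succeq>\<^sub>L Rmat p g \<phi> ** matrix_inv (Rmat p \<phi> \<phi>) ** transpose (Rmat p g \<phi>)"
proof -
  interpret joint_density p
    using p_meas p_nonneg p_int by unfold_locales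
  have "AE x in lborel. \<forall>l. x \<in> support p \<longrightarrow>
      (\<forall>m. post_exp p x (\<lambda>\<theta>. \<zeta> (x, \<theta>) $ l * \<phi> (x, \<theta>) $ m) = 0)"
    using zeta_orth by (intro AE_all_countable[THEN iffD2]) simp
  then have orth: "AE x in lborel. x \<in> support p \<longrightarrow> Rmat_post p x \<zeta> \<phi> = 0"
    by eventually_elim (simp add: Rmat_post_def vec_eq_iff)
  show ?thesis
    using Rmat_diff_ge_mat_marg_exp_proj_moment[OF g_W2 zeta_W2 phi_W2 orth Q_inv]
      mat_marg_exp_proj_moment_ge_proj_moment[OF g_W2 phi_W2 phi_indep Q_inv]
    by (simp add: proj_moment_def)
qed

end
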